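(* Up to isomorphism, the only $5$-regular, $1$ net-regular SRSG whose underlying graph is complete (i.e. $K_6$) is $\dot G_2$, the signed $K_6$ whose negative edges form two vertex-disjoint triangles; it has parameters $(6,5,-4,4)$. Moreover, no connected $5$-regular $1$ net-regular SRSG belongs to $\mathcal C_2$.
   Context: A signed graph $\dot G=(G,\sigma)$ is a simple graph $G$ with $\sigma:E(G)\to\{\pm1\}$; adjacency matrix $A_{\dot G}$ has entries $\sigma(v_iv_j)$ for adjacent vertices and $0$ otherwise. Net-degree is $d^+(v)-d^-(v)$; $\rho$ net-regular means all net-degrees equal $\rho$. $\dot G$ on $n$ vertices is an SRSG if it is neither homogeneous (all edges of one sign) complete nor edgeless and there are $r\in\mathbb N$, $a,b,c\in\mathbb Z$ with $(A^2_{\dot G})_{ii}=r$, $(A^2_{\dot G})_{ij}=a$ for positive edges, $b$ for negative edges, $c$ for distinct non-adjacent pairs; parameters $(n,r,a,b)$ when $G$ is complete. $\mathcal C_2$ is the class of inhomogeneous non-complete SRSGs with $a=-b$ and $c=0$. Isomorphism means sign-preserving graph isomorphism. *)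

theory Defs
  imports Main
begin

text \<open>A signed graph on a finite vertex set V is given by its signed adjacency
function s: s u v = sigma(uv) in {1,-1} if u,v adjacent, 0 otherwise.
So s is exactly the signed adjacency matrix A indexed by V.\<close>

definition signed_graph :: "'a set \<Rightarrow> ('a \<Rightarrow> 'a \<Rightarrow> int) \<Rightarrow> bool" where
  "signed_graph V s \<longleftrightarrow> finite V \<and>
     (\<forall>u v. s u v \<in> {-1, 0, 1}) \<and> (\<forall>u v. s u v = s v u) \<and> (\<forall>v. s v v = 0) \<and>
     (\<forall>u v. s u v \<noteq> 0 \<longrightarrow> u \<in> V \<and> v \<in> V)"

definition adj_sq :: "'a set \<Rightarrow> ('a \<Rightarrow> 'a \<Rightarrow> int) \<Rightarrow> 'a \<Rightarrow> 'a \<Rightarrow> int" where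
  "adj_sq V s u v = (\<Sum>w\<in>V. s u w * s w v)"

definition degree :: "'a set \<Rightarrow> ('a \<Rightarrow> 'a \<Rightarrow> int) \<Rightarrow> 'a \<Rightarrow> nat" where
  "degree V s v = card {w\<in>V. s v w \<noteq> 0}"

definition net_degree :: "'a set \<Rightarrow> ('a \<Rightarrow> 'a \<Rightarrow> int) \<Rightarrow> 'a \<Rightarrow> int" where
  "net_degree V s v = int (card {w\<in>V. s v w = 1}) - int (card {w\<in>V. s v w = -1})"

definition regular :: "'a set \<Rightarrow> ('a \<Rightarrow> 'a \<Rightarrow> int) \<Rightarrow> nat \<Rightarrow> bool" where
  "regular V s k \<longleftrightarrow> (\<forall>v\<in>V. degree V s v = k)"

definition net_regular :: "'a set \<Rightarrow> ('a \<Rightarrow> 'a \<Rightarrow> int) \<Rightarrow> int \<Rightarrow> bool" where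
  "net_regular V s \<rho> \<longleftrightarrow> (\<forall>v\<in>V. net_degree V s v = \<rho>)"

definition complete :: "'a set \<Rightarrow> ('a \<Rightarrow> 'a \<Rightarrow> int) \<Rightarrow> bool" where
  "complete V s \<longleftrightarrow> (\<forall>u\<in>V. \<forall>v\<in>V. u \<noteq> v \<longrightarrow> s u v \<noteq> 0)"

definition homogeneous :: "'a set \<Rightarrow> ('a \<Rightarrow> 'a \<Rightarrow> int) \<Rightarrow> bool" where
  "homogeneous V s \<longleftrightarrow> (\<forall>u\<in>V. \<forall>v\<in>V. s u v \<ge> 0) \<or> (\<forall>u\<in>V. \<forall>v\<in>V. s u v \<le> 0)"

definition edgeless :: "'a set \<Rightarrow> ('a \<Rightarrow> 'a \<Rightarrow> int) \<Rightarrow> bool" where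
  "edgeless V s \<longleftrightarrow> (\<forall>u\<in>V. \<forall>v\<in>V. s u v = 0)"

definition connected_sg :: "'a set \<Rightarrow> ('a \<Rightarrow> 'a \<Rightarrow> int) \<Rightarrow> bool" where
  "connected_sg V s \<longleftrightarrow> (\<forall>u\<in>V. \<forall>v\<in>V. (\<lambda>x y. s x y \<noteq> 0)\<^sup>*\<^sup>* u v)"

definition srsg_params :: "'a set \<Rightarrow> ('a \<Rightarrow> 'a \<Rightarrow> int) \<Rightarrow> nat \<Rightarrow> int \<Rightarrow> int \<Rightarrow> int \<Rightarrow> bool" where
  "srsg_params V s r a b c \<longleftrightarrow> signed_graph V s \<and>
     \<not> (homogeneous V s \<and> complete V s) \<and> \<not> edgeless V s \<and>
     (\<forall>v\<in>V. adj_sq V s v v = int r) \<and>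
     (\<forall>u\<in>V. \<forall>v\<in>V. u \<noteq> v \<longrightarrow>
        (s u v = 1 \<longrightarrow> adj_sq V s u v = a) \<and>
        (s u v = -1 \<longrightarrow> adj_sq V s u v = b) \<and>
        (s u v = 0 \<longrightarrow> adj_sq V s u v = c))"

definition SRSG :: "'a set \<Rightarrow> ('a \<Rightarrow> 'a \<Rightarrow> int) \<Rightarrow> bool" where
  "SRSG V s \<longleftrightarrow> (\<exists>r a b c. srsg_params V s r a b c)"

definition in_C2 :: "'a set \<Rightarrow> ('a \<Rightarrow> 'a \<Rightarrow> int) \<Rightarrow> bool" where
  "in_C2 V s \<longleftrightarrow> \<not> homogeneous V s \<and> \<not> complete V s \<and>
     (\<exists>r a. srsg_params V s r a (-a) 0)"

definition sg_iso :: "'a set \<Rightarrow> ('a \<Rightarrow> 'a \<Rightarrow> int) \<Rightarrow> 'b set \<Rightarrow> ('b \<Rightarrow> 'b \<Rightarrow> int) \<Rightarrow> bool" where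
  "sg_iso V s W t \<longleftrightarrow> (\<exists>f. bij_betw f V W \<and> (\<forall>u\<in>V. \<forall>v\<in>V. t (f u) (f v) = s u v))"

definition G2_V :: "nat set" where "G2_V = {0..5}"

definition G2_s :: "nat \<Rightarrow> nat \<Rightarrow> int" where
  "G2_s i j = (if i \<in> G2_V \<and> j \<in> G2_V \<and> i \<noteq> j
               then (if (i < 3) = (j < 3) then -1 else 1) else 0)"

end

theory Submission
  imports Defs
begin

text \<open>
  Summing a row of \<open>A\<^sup>2\<close> in two ways gives \<open>\<rho>\<^sup>2\<close> (as \<open>A\<close> has constant row sum \<open>\<rho>\<close>)
  and \<open>r + a d\<^sup>+ + b d\<^sup>- + c m\<close>, where \<open>m\<close> is the number of non-neighbours. For a 5-regular,
  1 net-regular SRSG with \<open>c m = 0\<close> (complete, or \<open>c = 0\<close>) this reads \<open>1 = 5 + 3a + 2b\<close>.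

  In \<open>C\<^sub>2\<close> we have \<open>b = -a\<close>, hence \<open>a = -4\<close>: adjacent vertices have four common
  neighbours, so two neighbours of a vertex are adjacent and a connected such graph is complete.

  On \<open>K\<^sub>6\<close> with net degree 1 one has \<open>A\<^sup>2\<^sub>u\<^sub>v = 4 N(u,v) - 2 - 2\<sigma>(uv)\<close>, where
  \<open>N(u,v)\<close> counts common negative neighbours. So \<open>a + 4\<close> and \<open>b\<close> are non-negative multiples
  of 4, which forces \<open>(a, b) = (-4, 4)\<close>. Thus every negative edge lies in exactly one negative
  triangle; as every vertex has two negative neighbours, the negative edges form two disjoint
  triangles.
\<close>

lemma signed_graph_values: "signed_graph V s \<Longrightarrow> s u v \<in> {-1, 0, 1}"
  unfolding signed_graph_def by blast

lemma signed_graph_sym: "signed_graph V s \<Longrightarrow> s u v = s v u"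
  unfolding signed_graph_def by blast

lemma signed_graph_loop_free [simp]: "signed_graph V s \<Longrightarrow> s v v = 0"
  unfolding signed_graph_def by blast

lemma signed_graph_finite: "signed_graph V s \<Longrightarrow> finite V"
  unfolding signed_graph_def by blast

lemma signed_graph_edge_in: "signed_graph V s \<Longrightarrow> s u v \<noteq> 0 \<Longrightarrow> u \<in> V \<and> v \<in> V"
  unfolding signed_graph_def by blast

definition pos_nbrs :: "'a set \<Rightarrow> ('a \<Rightarrow> 'a \<Rightarrow> int) \<Rightarrow> 'a \<Rightarrow> 'a set" where
  "pos_nbrs V s v = {w\<in>V. s v w = 1}"

definition neg_nbrs :: "'a set \<Rightarrow> ('a \<Rightarrow> 'a \<Rightarrow> int) \<Rightarrow> 'a \<Rightarrow> 'a set" where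
  "neg_nbrs V s v = {w\<in>V. s v w = -1}"

definition non_nbrs :: "'a set \<Rightarrow> ('a \<Rightarrow> 'a \<Rightarrow> int) \<Rightarrow> 'a \<Rightarrow> 'a set" where
  "non_nbrs V s v = {w\<in>V. w \<noteq> v \<and> s v w = 0}"

lemma net_degree_eq_card: "net_degree V s v = int (card (pos_nbrs V s v)) - int (card (neg_nbrs V s v))"
  unfolding net_degree_def pos_nbrs_def neg_nbrs_def ..

lemma degree_eq_card_pos_neg:
  assumes "signed_graph V s"
  shows "degree V s v = card (pos_nbrs V s v) + card (neg_nbrs V s v)"
proof -
  have "{w\<in>V. s v w \<noteq> 0} = pos_nbrs V s v \<union> neg_nbrs V s v"
    using signed_graph_values[OF assms, of v] by (auto simp: pos_nbrs_def neg_nbrs_def)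
  then show ?thesis
    using signed_graph_finite[OF assms] unfolding degree_def
    by (simp add: card_Un_disjoint pos_nbrs_def neg_nbrs_def disjoint_iff)
qed

lemma card_pos_neg_nbrs_5_1:
  assumes "signed_graph V s" "degree V s v = 5" "net_degree V s v = 1"
  shows "card (pos_nbrs V s v) = 3" "card (neg_nbrs V s v) = 2"
  using assms degree_eq_card_pos_neg[OF assms(1), of v] net_degree_eq_card[of V s v] by linarith+

lemma sum_row_eq_net_degree:
  assumes "signed_graph V s"
  shows "(\<Sum>w\<in>V. s v w) = net_degree V s v"
proof -
  have "s v w = of_bool (w \<in> pos_nbrs V s v) - of_bool (w \<in> neg_nbrs V s v)" if "w \<in> V" for w
    using signed_graph_values[OF assms, of v w] that by (auto simp: pos_nbrs_def neg_nbrs_def)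
  then have "(\<Sum>w\<in>V. s v w) = (\<Sum>w\<in>V. of_bool (w \<in> pos_nbrs V s v) - of_bool (w \<in> neg_nbrs V s v))"
    by (rule sum.cong[OF refl])
  also have "\<dots> = net_degree V s v"
    using signed_graph_finite[OF assms]
    by (simp add: sum_subtractf net_degree_eq_card pos_nbrs_def neg_nbrs_def Int_def)
  finally show ?thesis .
qed

lemma adj_sq_diag:
  assumes "signed_graph V s"
  shows "adj_sq V s v v = int (degree V s v)"
proof -
  have "s v w * s w v = of_bool (s v w \<noteq> 0)" for w
    using signed_graph_values[OF assms, of v w] signed_graph_sym[OF assms, of v w] by auto
  then show ?thesis
    using signed_graph_finite[OF assms] by (simp add: adj_sq_def degree_def Int_def)
qed

lemma sum_adj_sq_row_net_regular:
  assumes sg: "signed_graph V s" and nr: "net_regular V s \<rho>" and u: "u \<in> V"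
  shows "(\<Sum>v\<in>V. adj_sq V s u v) = \<rho> * \<rho>"
proof -
  have row: "(\<Sum>v\<in>V. s w v) = \<rho>" if "w \<in> V" for w
    using sum_row_eq_net_degree[OF sg] nr that by (simp add: net_regular_def)
  have "(\<Sum>v\<in>V. adj_sq V s u v) = (\<Sum>w\<in>V. s u w * (\<Sum>v\<in>V. s w v))"
    unfolding adj_sq_def sum_distrib_left by (rule sum.swap)
  also have "\<dots> = (\<Sum>w\<in>V. s u w) * \<rho>"
    by (simp add: row sum_distrib_right)
  finally show ?thesis using row[OF u] by simp
qed

lemma srsg_params_adj_sq:
  assumes "srsg_params V s r a b c" "u \<in> V" "v \<in> V" "u \<noteq> v"
  shows "adj_sq V s u v = (if s u v = 1 then a else if s u v = -1 then b else c)"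
proof -
  have "signed_graph V s" using assms(1) by (simp add: srsg_params_def)
  then have "s u v \<in> {-1, 0, 1}" by (rule signed_graph_values)
  then show ?thesis using assms by (auto simp: srsg_params_def)
qed

lemma sum_adj_sq_row_srsg:
  assumes p: "srsg_params V s r a b c" and u: "u \<in> V"
  shows "(\<Sum>v\<in>V. adj_sq V s u v) = int r + a * int (card (pos_nbrs V s u))
     + b * int (card (neg_nbrs V s u)) + c * int (card (non_nbrs V s u))"
proof -
  have sg: "signed_graph V s" using p by (simp add: srsg_params_def)
  have fin: "finite V" using signed_graph_finite[OF sg] .
  have off_diag: "adj_sq V s u v = a * of_bool (v \<in> pos_nbrs V s u)
      + b * of_bool (v \<in> neg_nbrs V s u) + c * of_bool (v \<in> non_nbrs V s u)"
    if "v \<in> V - {u}" for v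
    using that srsg_params_adj_sq[OF p u, of v] signed_graph_values[OF sg, of u v]
    by (auto simp: pos_nbrs_def neg_nbrs_def non_nbrs_def)
  have nbrs_off_diag: "(V - {u}) \<inter> pos_nbrs V s u = pos_nbrs V s u"
    "(V - {u}) \<inter> neg_nbrs V s u = neg_nbrs V s u" "(V - {u}) \<inter> non_nbrs V s u = non_nbrs V s u"
    using sg by (auto simp: pos_nbrs_def neg_nbrs_def non_nbrs_def)
  have "(\<Sum>v\<in>V. adj_sq V s u v) = adj_sq V s u u + (\<Sum>v\<in>V - {u}. adj_sq V s u v)"
    using fin u by (simp add: sum.remove)
  also have "(\<Sum>v\<in>V - {u}. adj_sq V s u v) = a * int (card (pos_nbrs V s u))
     + b * int (card (neg_nbrs V s u)) + c * int (card (non_nbrs V s u))"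
    using fin by (simp add: off_diag sum.distrib nbrs_off_diag flip: sum_distrib_left)
  finally show ?thesis using p u by (simp add: srsg_params_def add.assoc)
qed

lemma srsg_params_5_1_row_sum_eq:
  assumes p: "srsg_params V s r a b c" and reg: "regular V s 5" and nr: "net_regular V s 1"
    and u: "u \<in> V"
  shows "r = 5" "5 + 3 * a + 2 * b + c * int (card (non_nbrs V s u)) = 1"
proof -
  have sg: "signed_graph V s" using p by (simp add: srsg_params_def)
  have deg: "degree V s u = 5" and net: "net_degree V s u = 1"
    using reg nr u by (auto simp: regular_def net_regular_def)
  show r: "r = 5" using p u adj_sq_diag[OF sg, of u] deg by (simp add: srsg_params_def)
  show "5 + 3 * a + 2 * b + c * int (card (non_nbrs V s u)) = 1"
    using sum_adj_sq_row_net_regular[OF sg nr u] sum_adj_sq_row_srsg[OF p u]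
      card_pos_neg_nbrs_5_1[OF sg deg net] r by simp
qed

lemma abs_adj_sq_le_card_common_nbrs:
  assumes sg: "signed_graph V s"
  shows "\<bar>adj_sq V s u v\<bar> \<le> int (card {w\<in>V. s u w \<noteq> 0 \<and> s w v \<noteq> 0})"
proof -
  let ?C = "{w\<in>V. s u w \<noteq> 0 \<and> s w v \<noteq> 0}"
  have "adj_sq V s u v = (\<Sum>w\<in>?C. s u w * s w v)"
    unfolding adj_sq_def by (rule sum.mono_neutral_right) (use signed_graph_finite[OF sg] in auto)
  also have "\<bar>\<dots>\<bar> \<le> (\<Sum>w\<in>?C. \<bar>s u w * s w v\<bar>)" by (rule sum_abs)
  also have "\<dots> \<le> (\<Sum>w\<in>?C. 1)"
  proof (rule sum_mono)
    fix w
    show "\<bar>s u w * s w v\<bar> \<le> 1"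
      using signed_graph_values[OF sg, of u w] signed_graph_values[OF sg, of w v] by auto
  qed
  finally show ?thesis by simp
qed

lemma adjacent_if_abs_adj_sq_eq:
  assumes sg: "signed_graph V s" and reg: "regular V s k"
    and edges: "\<And>x y. s x y \<noteq> 0 \<Longrightarrow> \<bar>adj_sq V s x y\<bar> = int k - 1"
    and uv: "s u v \<noteq> 0" and uw: "s u w \<noteq> 0" and wv: "w \<noteq> v"
  shows "s w v \<noteq> 0"
proof
  assume wv0: "s w v = 0"
  let ?N = "{x\<in>V. s u x \<noteq> 0}"
  let ?C = "{x\<in>V. s u x \<noteq> 0 \<and> s x v \<noteq> 0}"
  have fin: "finite V" using signed_graph_finite[OF sg] .
  have "u \<in> V" "v \<in> V" "w \<in> V" using signed_graph_edge_in[OF sg] uv uw by auto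
  then have "card ?N = k" using reg by (simp add: regular_def degree_def)
  moreover have "{v, w} \<subseteq> ?N" using \<open>v \<in> V\<close> \<open>w \<in> V\<close> uv uw by auto
  moreover have "?C \<subseteq> ?N - {v, w}" using sg wv0 by auto
  then have "card ?C \<le> card (?N - {v, w})" by (intro card_mono) (use fin in auto)
  ultimately have "card ?C + 2 \<le> k"
    using wv fin card_mono[of ?N "{v, w}"] by (simp add: card_Diff_subset)
  then show False
    using abs_adj_sq_le_card_common_nbrs[OF sg, of u v] edges[OF uv] by linarith
qed

lemma complete_if_connected_adjacency_closed:
  assumes sg: "signed_graph V s" and conn: "connected_sg V s"
    and closed: "\<And>u v w. s u v \<noteq> 0 \<Longrightarrow> s u w \<noteq> 0 \<Longrightarrow> w \<noteq> v \<Longrightarrow> s w v \<noteq> 0"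
  shows "complete V s"
  unfolding complete_def
proof (intro ballI impI)
  fix u v assume "u \<in> V" "v \<in> V" "u \<noteq> v"
  have "z = u \<or> s u z \<noteq> 0" if "(\<lambda>x y. s x y \<noteq> 0)\<^sup>*\<^sup>* u z" for z
    using that
  proof (induction rule: rtranclp_induct)
    case base
    then show ?case by simp
  next
    case (step y z)
    then show ?case
      using closed[of y u z] signed_graph_sym[OF sg, of y u] signed_graph_sym[OF sg, of z u]
      by (cases "y = u") auto
  qed
  then show "s u v \<noteq> 0"
    using conn \<open>u \<in> V\<close> \<open>v \<in> V\<close> \<open>u \<noteq> v\<close> by (auto simp: connected_sg_def)
qed

lemma not_in_C2_if_connected_5_1:
  assumes sg: "signed_graph V s" and conn: "connected_sg V s"
    and reg: "regular V s 5" and nr: "net_regular V s 1"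
  shows "\<not> in_C2 V s"
proof
  assume C2: "in_C2 V s"
  then obtain r a where p: "srsg_params V s r a (-a) 0" by (auto simp: in_C2_def)
  obtain u where u: "u \<in> V" using C2 by (auto simp: in_C2_def complete_def)
  have a: "a = -4" using srsg_params_5_1_row_sum_eq(2)[OF p reg nr u] by simp
  have "\<bar>adj_sq V s x y\<bar> = int 5 - 1" if "s x y \<noteq> 0" for x y
    using srsg_params_adj_sq[OF p] signed_graph_edge_in[OF sg that] that
      signed_graph_values[OF sg, of x y] a sg by force
  then have "complete V s"
    using complete_if_connected_adjacency_closed[OF sg conn]
      adjacent_if_abs_adj_sq_eq[OF sg reg] by blast
  then show False using C2 by (simp add: in_C2_def)
qed

lemma card_eq_degree_if_complete:
  assumes sg: "signed_graph V s" and cp: "complete V s" and v: "v \<in> V"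
  shows "card V = degree V s v + 1"
proof -
  have "{w\<in>V. s v w \<noteq> 0} = V - {v}" using cp v sg by (auto simp: complete_def)
  then show ?thesis using v signed_graph_finite[OF sg] card_Suc_Diff1 by (fastforce simp: degree_def)
qed

lemma adj_sq_complete_net_regular:
  assumes sg: "signed_graph V s" and cp: "complete V s" and nr: "net_regular V s \<rho>"
    and u: "u \<in> V" and v: "v \<in> V" and uv: "u \<noteq> v"
  shows "adj_sq V s u v = 4 * int (card {w\<in>V. s u w = -1 \<and> s w v = -1})
    - int (card V) + 2 + 2 * \<rho> - 2 * s u v"
proof -
  define W where "W = V - {u, v}"
  have fin: "finite V" using signed_graph_finite[OF sg] .
  have pm: "s x y \<in> {-1, 1}" if "x \<in> V" "y \<in> V" "x \<noteq> y" for x y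
    using cp that signed_graph_values[OF sg, of x y] by (auto simp: complete_def)
  have row_W: "(\<Sum>w\<in>W. s x w) = \<rho> - s x u - s x v" if "x \<in> V" for x
  proof -
    have "(\<Sum>w\<in>V. s x w) = (\<Sum>w\<in>W. s x w) + (\<Sum>w\<in>{u, v}. s x w)"
      unfolding W_def using fin u v by (intro sum.subset_diff) auto
    then show ?thesis
      using sum_row_eq_net_degree[OF sg, of x] nr that uv by (simp add: net_regular_def)
  qed
  have "adj_sq V s u v = (\<Sum>w\<in>W. s u w * s w v)"
    unfolding adj_sq_def W_def by (rule sum.mono_neutral_right) (use fin sg in auto)
  also have "\<dots> = (\<Sum>w\<in>W. 4 * of_bool (s u w = -1 \<and> s w v = -1) - 1 + s u w + s v w)"
  proof (rule sum.cong[OF refl])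
    fix w assume "w \<in> W"
    then show "s u w * s w v = 4 * of_bool (s u w = -1 \<and> s w v = -1) - 1 + s u w + s v w"
      using pm[OF u, of w] pm[OF v, of w] signed_graph_sym[OF sg, of v w] u v
      by (auto simp: W_def)
  qed
  also have "\<dots> = 4 * int (card {w\<in>W. s u w = -1 \<and> s w v = -1}) - int (card W)
      + (\<rho> - s u v) + (\<rho> - s u v)"
    using fin sg row_W[OF u] row_W[OF v] signed_graph_sym[OF sg, of v u]
    by (simp add: W_def sum.distrib sum_subtractf Int_def flip: sum_distrib_left)
  also have "{w\<in>W. s u w = -1 \<and> s w v = -1} = {w\<in>V. s u w = -1 \<and> s w v = -1}"
    using sg by (auto simp: W_def)
  also have "int (card W) = int (card V) - 2"
    using fin u v uv card_mono[OF fin, of "{u, v}"] by (simp add: W_def card_Diff_subset of_nat_diff)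
  finally show ?thesis by simp
qed

lemma srsg_params_complete_5_1:
  assumes p: "srsg_params V s r a b c" and cp: "complete V s"
    and reg: "regular V s 5" and nr: "net_regular V s 1"
  shows "card V = 6" "r = 5" "a = -4" "b = 4"
proof -
  have sg: "signed_graph V s" using p by (simp add: srsg_params_def)
  obtain u where u: "u \<in> V" using p by (auto simp: srsg_params_def edgeless_def)
  have deg: "degree V s u = 5" and net: "net_degree V s u = 1"
    using reg nr u by (auto simp: regular_def net_regular_def)
  show "card V = 6" using card_eq_degree_if_complete[OF sg cp u] deg by simp
  show "r = 5" using srsg_params_5_1_row_sum_eq(1)[OF p reg nr u] .
  have "non_nbrs V s u = {}" using cp u by (auto simp: non_nbrs_def complete_def)
  then have ab: "3 * a + 2 * b = -4" using srsg_params_5_1_row_sum_eq(2)[OF p reg nr u] by simp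
  have "neg_nbrs V s u \<noteq> {}" "pos_nbrs V s u \<noteq> {}"
    using card_pos_neg_nbrs_5_1[OF sg deg net] by auto
  then obtain x y where x: "x \<in> V" "s u x = -1" and y: "y \<in> V" "s u y = 1"
    by (auto simp: neg_nbrs_def pos_nbrs_def)
  have "u \<noteq> x" "u \<noteq> y" using x y sg by auto
  have "b = 4 * int (card {w\<in>V. s u w = -1 \<and> s w x = -1})"
    using adj_sq_complete_net_regular[OF sg cp nr u x(1) \<open>u \<noteq> x\<close>]
      srsg_params_adj_sq[OF p u x(1) \<open>u \<noteq> x\<close>] x(2) \<open>card V = 6\<close> by simp
  moreover have "a = 4 * int (card {w\<in>V. s u w = -1 \<and> s w y = -1}) - 4"
    using adj_sq_complete_net_regular[OF sg cp nr u y(1) \<open>u \<noteq> y\<close>]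
      srsg_params_adj_sq[OF p u y(1) \<open>u \<noteq> y\<close>] y(2) \<open>card V = 6\<close> by simp
  ultimately show "a = -4" "b = 4" using ab by presburger+
qed

lemma closed_neg_nbrs_eq:
  assumes sg: "signed_graph V s"
    and two: "card (neg_nbrs V s u) = 2" "card (neg_nbrs V s v) = 2"
    and uv: "s u v = -1" and uw: "s u w = -1" and wv: "s w v = -1"
  shows "insert u (neg_nbrs V s u) = insert v (neg_nbrs V s v)"
proof -
  have V: "u \<in> V" "v \<in> V" "w \<in> V"
    using signed_graph_edge_in[OF sg, of u v] signed_graph_edge_in[OF sg, of u w] uv uw by auto
  have ne: "u \<noteq> w" "v \<noteq> w" using uw wv sg by auto
  have fin: "finite (neg_nbrs V s x)" for x
    using signed_graph_finite[OF sg] by (simp add: neg_nbrs_def)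
  have "{v, w} \<subseteq> neg_nbrs V s u" "{u, w} \<subseteq> neg_nbrs V s v"
    using V uv uw wv signed_graph_sym[OF sg, of u v] signed_graph_sym[OF sg, of v w]
    by (auto simp: neg_nbrs_def)
  then have "neg_nbrs V s u = {v, w}" "neg_nbrs V s v = {u, w}"
    using card_subset_eq[OF fin] two ne by (metis card_2_iff)+
  then show ?thesis by auto
qed

lemma neg_triangle_partition:
  assumes sg: "signed_graph V s" and cp: "complete V s" and c6: "card V = 6"
    and two: "\<And>x. x \<in> V \<Longrightarrow> card (neg_nbrs V s x) = 2"
    and closed: "\<And>u v. s u v = -1 \<Longrightarrow> insert u (neg_nbrs V s u) = insert v (neg_nbrs V s v)"
    and u0: "u0 \<in> V"
  obtains T where "T \<subseteq> V" "card T = 3" "card (V - T) = 3"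
    "\<And>x y. x \<in> V \<Longrightarrow> y \<in> V \<Longrightarrow> x \<noteq> y \<Longrightarrow> s x y = (if (x \<in> T) = (y \<in> T) then -1 else 1)"
proof -
  define K where "K x = insert x (neg_nbrs V s x)" for x
  define T where "T = K u0"
  have fin: "finite V" using signed_graph_finite[OF sg] .
  have K_sub: "K x \<subseteq> V" if "x \<in> V" for x using that by (auto simp: K_def neg_nbrs_def)
  have card_K: "card (K x) = 3" if "x \<in> V" for x
    using two[OF that] fin sg by (simp add: K_def neg_nbrs_def)
  have mem_K: "y \<in> K x \<longleftrightarrow> y = x \<or> s x y = -1" if "y \<in> V" for x y
    using that by (auto simp: K_def neg_nbrs_def)
  have K_eq: "K y = K x" if "y \<in> K x" for x y
  proof (cases "y = x")
    case False
    then have "s x y = -1" using that by (simp add: K_def neg_nbrs_def)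
    then show ?thesis using closed[of x y] by (simp add: K_def)
  qed simp
  have in_T: "K x = T" if "x \<in> T" for x
    using K_eq[of x u0] that by (simp add: T_def)
  have "card T = 3" using card_K[OF u0] by (simp add: T_def)
  moreover have "T \<subseteq> V" using K_sub[OF u0] by (simp add: T_def)
  ultimately have "card (V - T) = 3" using c6 fin by (simp add: card_Diff_subset finite_subset)
  have out_T: "K x = V - T" if "x \<in> V - T" for x
  proof (rule card_subset_eq)
    show "finite (V - T)" using fin by simp
    have "K x \<inter> T = {}"
    proof (rule ccontr)
      assume "K x \<inter> T \<noteq> {}"
      then obtain y where "y \<in> K x" "y \<in> T" by blast
      then have "K x = T" using K_eq in_T by metis
      then show False using that by (auto simp: K_def)
    qed
    then show "K x \<subseteq> V - T" using K_sub that by blast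
    show "card (K x) = card (V - T)" using card_K that \<open>card (V - T) = 3\<close> by simp
  qed
  have "s x y = (if (x \<in> T) = (y \<in> T) then -1 else 1)" if "x \<in> V" "y \<in> V" "x \<noteq> y" for x y
  proof -
    have "s x y = -1 \<longleftrightarrow> (x \<in> T) = (y \<in> T)"
      using mem_K[OF that(2), of x] in_T[of x] out_T[of x] that by auto
    moreover have "s x y \<in> {-1, 1}"
      using cp that signed_graph_values[OF sg, of x y] by (auto simp: complete_def)
    ultimately show ?thesis by auto
  qed
  then show ?thesis using that \<open>T \<subseteq> V\<close> \<open>card T = 3\<close> \<open>card (V - T) = 3\<close> by blast
qed

lemma sg_iso_G2I:
  assumes sg: "signed_graph V s" and T: "T \<subseteq> V" "card T = 3" "card (V - T) = 3"
    and s_eq: "\<And>x y. x \<in> V \<Longrightarrow> y \<in> V \<Longrightarrow> x \<noteq> y \<Longrightarrow>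
      s x y = (if (x \<in> T) = (y \<in> T) then -1 else 1)"
  shows "sg_iso V s G2_V G2_s"
proof -
  have fin: "finite V" using signed_graph_finite[OF sg] .
  obtain g where g: "bij_betw g T {0..<3::nat}"
    using finite_same_card_bij[of T "{0..<3::nat}"] T finite_subset[OF T(1) fin] by auto
  obtain h where h: "bij_betw h (V - T) {3..<6::nat}"
    using finite_same_card_bij[of "V - T" "{3..<6::nat}"] T fin by auto
  define f where "f x = (if x \<in> T then g x else h x)" for x
  have "bij_betw f (T \<union> (V - T)) ({0..<3} \<union> {3..<6})"
  proof (rule bij_betw_combine)
    show "bij_betw f T {0..<3}" using g by (rule bij_betw_cong[THEN iffD1, rotated]) (simp add: f_def)
    show "bij_betw f (V - T) {3..<6}" using h by (rule bij_betw_cong[THEN iffD1, rotated]) (simp add: f_def)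
  qed auto
  moreover have "T \<union> (V - T) = V" "{0..<3} \<union> {3..<6} = G2_V" using T(1) by (auto simp: G2_V_def)
  ultimately have f: "bij_betw f V G2_V" by simp
  have "G2_s (f x) (f y) = s x y" if "x \<in> V" "y \<in> V" for x y
  proof -
    have "f x \<in> G2_V" "f y \<in> G2_V" using f that by (auto dest: bij_betw_apply)
    moreover have "f x = f y \<longleftrightarrow> x = y" using f that by (auto simp: bij_betw_def inj_on_eq_iff)
    moreover have "f z < 3 \<longleftrightarrow> z \<in> T" if "z \<in> V" for z
      using that bij_betw_apply[OF g] bij_betw_apply[OF h] by (force simp: f_def)
    ultimately show ?thesis using that s_eq[OF that] sg by (auto simp: G2_s_def)
  qed
  then show ?thesis using f by (auto simp: sg_iso_def)
qed

lemma srsg_params_complete_any_c: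
  assumes "srsg_params V s r a b c" "complete V s"
  shows "srsg_params V s r a b c'"
  using assms by (auto simp: srsg_params_def complete_def)

lemma complete_5_1_srsg_iso_G2:
  assumes sg: "signed_graph V s" and cp: "complete V s"
    and reg: "regular V s 5" and nr: "net_regular V s 1" and "SRSG V s"
  shows "sg_iso V s G2_V G2_s" "card V = 6" "srsg_params V s 5 (-4) 4 c"
proof -
  obtain r a b c0 where p: "srsg_params V s r a b c0" using \<open>SRSG V s\<close> by (auto simp: SRSG_def)
  note params = srsg_params_complete_5_1[OF p cp reg nr]
  show "card V = 6" by (fact params(1))
  show "srsg_params V s 5 (-4) 4 c"
    using srsg_params_complete_any_c[OF p cp] params by simp
  have two: "card (neg_nbrs V s x) = 2" if "x \<in> V" for x
    using card_pos_neg_nbrs_5_1[OF sg] reg nr that by (simp add: regular_def net_regular_def)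
  have common: "\<exists>w. s u w = -1 \<and> s w v = -1" if uv: "s u v = -1" for u v
  proof -
    have "u \<in> V" "v \<in> V" "u \<noteq> v"
      using signed_graph_edge_in[OF sg, of u v] uv sg by auto
    then have "card {w\<in>V. s u w = -1 \<and> s w v = -1} = 1"
      using adj_sq_complete_net_regular[OF sg cp nr \<open>u \<in> V\<close> \<open>v \<in> V\<close> \<open>u \<noteq> v\<close>]
        srsg_params_adj_sq[OF p \<open>u \<in> V\<close> \<open>v \<in> V\<close> \<open>u \<noteq> v\<close>] uv params by simp
    then show ?thesis by (auto simp: card_Suc_eq)
  qed
  have closed: "insert u (neg_nbrs V s u) = insert v (neg_nbrs V s v)" if uv: "s u v = -1" for u v
  proof -
    obtain w where uw: "s u w = -1" and wv: "s w v = -1" using common[OF uv] by blast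
    have "u \<in> V" "v \<in> V" using signed_graph_edge_in[OF sg, of u v] uv by auto
    then show ?thesis using closed_neg_nbrs_eq[OF sg two two uv uw wv] by simp
  qed
  obtain u0 where "u0 \<in> V" using p by (auto simp: srsg_params_def edgeless_def)
  then obtain T where "T \<subseteq> V" "card T = 3" "card (V - T) = 3"
    "\<And>x y. x \<in> V \<Longrightarrow> y \<in> V \<Longrightarrow> x \<noteq> y \<Longrightarrow> s x y = (if (x \<in> T) = (y \<in> T) then -1 else 1)"
    using neg_triangle_partition[OF sg cp params(1)] two closed by blast
  then show "sg_iso V s G2_V G2_s" by (rule sg_iso_G2I[OF sg])
qed

lemma G2_V_eq: "G2_V = {0, 1, 2, 3, 4, 5}"
  by (auto simp: G2_V_def)

lemma signed_graph_G2: "signed_graph G2_V G2_s"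
  by (auto simp: signed_graph_def G2_s_def G2_V_eq)

lemma complete_G2: "complete G2_V G2_s"
  by (auto simp: complete_def G2_s_def)

lemma adj_sq_G2: "adj_sq G2_V G2_s u v =
    (if u \<notin> G2_V \<or> v \<notin> G2_V then 0 else if u = v then 5 else - 4 * G2_s u v)"
  by (auto simp: adj_sq_def G2_s_def G2_V_eq)

lemma regular_G2: "regular G2_V G2_s 5"
  unfolding regular_def
proof
  fix v assume "v \<in> G2_V"
  then show "degree G2_V G2_s v = 5"
    using adj_sq_diag[OF signed_graph_G2, of v] by (simp add: adj_sq_G2)
qed

lemma net_regular_G2: "net_regular G2_V G2_s 1"
  unfolding net_regular_def sum_row_eq_net_degree[OF signed_graph_G2, symmetric]
  by (auto simp: G2_s_def G2_V_eq)

lemma srsg_params_G2: "srsg_params G2_V G2_s 5 (-4) 4 0"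
proof -
  have "\<not> homogeneous G2_V G2_s"
    by (auto simp: homogeneous_def G2_s_def G2_V_eq intro!: bexI[of _ 0] bexI[of _ 1] bexI[of _ 3])
  moreover have "\<not> edgeless G2_V G2_s"
    by (auto simp: edgeless_def G2_s_def G2_V_eq intro!: bexI[of _ 0] bexI[of _ 1])
  ultimately show ?thesis
    using signed_graph_G2 by (auto simp: srsg_params_def adj_sq_G2 G2_s_def)
qed

theorem mainTheorem14:
  shows "(signed_graph G2_V G2_s \<and> complete G2_V G2_s \<and> regular G2_V G2_s 5 \<and>
          net_regular G2_V G2_s 1 \<and> card G2_V = 6 \<and> srsg_params G2_V G2_s 5 (-4) 4 0)
    \<and> (\<forall>(V :: 'a set) s. signed_graph V s \<and> complete V s \<and> regular V s 5 \<and>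
          net_regular V s 1 \<and> SRSG V s \<longrightarrow>
          sg_iso V s G2_V G2_s \<and> card V = 6 \<and> (\<forall>c. srsg_params V s 5 (-4) 4 c))
    \<and> (\<forall>(V :: 'b set) s. signed_graph V s \<and> connected_sg V s \<and> regular V s 5 \<and>
          net_regular V s 1 \<and> SRSG V s \<longrightarrow> \<not> in_C2 V s)"
proof -
  have "card G2_V = 6" by (simp add: G2_V_eq)
  then show ?thesis
    using signed_graph_G2 complete_G2 regular_G2 net_regular_G2 srsg_params_G2
      complete_5_1_srsg_iso_G2 not_in_C2_if_connected_5_1 by blast
qed

end
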